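(* Every point $(X_1,X_2,A)\in\mathbb C^2\times\mathbb R$ satisfying $$-2\,\mathrm{Re}(X_1+X_2)-2\,\mathrm{Re}\bigl(X_1\overline{X}_2e^{-2iA}\bigr)+|X_1|^2+|X_2|^2+1=0$$ with $-\pi/2<A<\pi/2$ satisfies $\mathrm{Re}(X_1e^{-iA})\ge0$. *)

theory Defs
  imports Complex_Main
begin

end

theory Submission
  imports Defs
begin

text \<open>With \<open>u = exp (-\<i>A)\<close>, the square \<open>\<bar>X\<^sub>1 u - (X\<^sub>2 - 1) cnj u\<bar>\<^sup>2\<close>
  exceeds the left-hand side of the defining equation by exactly \<open>4 cos A Re (X\<^sub>1 u)\<close>.
  On the locus this product is therefore a square, hence nonnegative, and \<open>cos A > 0\<close>
  for \<open>\<bar>A\<bar> < \<pi>/2\<close>.\<close>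

lemma cmod_rotated_difference_sq:
  fixes X1 X2 :: complex and A :: real
  shows "(cmod (X1 * exp (- \<i> * A) - (X2 - 1) * exp (\<i> * A)))\<^sup>2
       = - 2 * Re (X1 + X2) - 2 * Re (X1 * cnj X2 * exp (- 2 * \<i> * A))
           + (cmod X1)\<^sup>2 + (cmod X2)\<^sup>2 + 1 + 4 * cos A * Re (X1 * exp (- \<i> * A))"
proof -
  obtain x1 y1 x2 y2 where X: "X1 = Complex x1 y1" "X2 = Complex x2 y2"
    by (meson complex.exhaust_sel)
  have rotations:
    "exp (- \<i> * A) = Complex (cos A) (- sin A)"
    "exp (\<i> * A) = Complex (cos A) (sin A)"
    "exp (- 2 * \<i> * A) = Complex ((cos A)\<^sup>2 - (sin A)\<^sup>2) (- 2 * sin A * cos A)"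
    by (simp_all add: complex_eq_iff Re_exp Im_exp cos_double sin_double)
  have pythagoras: "(sin A)\<^sup>2 + (cos A)\<^sup>2 = 1"
    by simp
  show ?thesis
    unfolding cmod_power2 X rotations by simp (use pythagoras in algebra)
qed

theorem proposition3p10:
  fixes X1 X2 :: complex and A :: real
  assumes "- 2 * Re (X1 + X2) - 2 * Re (X1 * cnj X2 * exp (- 2 * \<i> * complex_of_real A))
             + (cmod X1)\<^sup>2 + (cmod X2)\<^sup>2 + 1 = 0"
    and "- (pi / 2) < A" and "A < pi / 2"
  shows "Re (X1 * exp (- \<i> * complex_of_real A)) \<ge> 0"
proof -
  have "4 * cos A * Re (X1 * exp (- \<i> * A))
        = (cmod (X1 * exp (- \<i> * A) - (X2 - 1) * exp (\<i> * A)))\<^sup>2"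
    using cmod_rotated_difference_sq [of X1 A X2] assms(1) by simp
  then have "4 * cos A * Re (X1 * exp (- \<i> * A)) \<ge> 0"
    by simp
  moreover have "cos A > 0"
    using assms(2,3) by (simp add: cos_gt_zero_pi)
  ultimately show ?thesis
    by (simp add: zero_le_mult_iff)
qed

end
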